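(* Let $\mathcal{G}\subseteq\mathcal{G}'$ be two building sets of the lattice of flats $\mathcal{L}$ of the same loopless matroid. If $\mathcal{G}'$ is flag, then there exists a binary filtration of $\mathcal{G}'$ from $\mathcal{G}$, i.e. a sequence of building sets $\mathcal{G}=\mathcal{G}_p\subsetneq\mathcal{G}_{p-1}\subsetneq\dots\subsetneq\mathcal{G}_0=\mathcal{G}'$ of $\mathcal{L}$ such that for each $i$, $\mathcal{G}_i\setminus\mathcal{G}_{i+1}$ consists of a single element $G$, and $G$ has exactly two factors in $\mathcal{G}_{i+1}$ (i.e. $\max(\mathcal{G}_{i+1})_{\leqslant G}$ has exactly two elements).
   Context: A building set of $\mathcal{L}$ is $\mathcal{H}\subseteq\mathcal{L}\setminus\{\hat0\}$ such that for every $F\neq\hat0$, with $\max\mathcal{H}_{\leqslant F}$ the maximal elements of $\{H\in\mathcal{H}:H\leqslant F\}$ (the $\mathcal{H}$-factors of $F$), the join map $\prod_{H\in\max\mathcal{H}_{\leqslant F}}[\hat0,H]\to[\hat0,F]$ is a poset isomorphism. $\mathcal{S}\subseteq\mathcal{H}$ is nested if for every antichain $A\subseteq\mathcal{S}$ and $\{S_1,\dots,S_k\}\subseteq A$, $k\geqslant2$, $S_1\vee\dots\vee S_k\notin\mathcal{H}$. $\mathcal{H}$ is flag if the simplicial complex of nested sets contained in $\mathcal{H}\setminus\max\mathcal{H}$ is flag (all minimal non-faces have size $2$). *)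

theory Defs
  imports Main "HOL-Library.FuncSet"
begin

definition matroid :: "'a set \<Rightarrow> ('a set \<Rightarrow> bool) \<Rightarrow> bool" where
  "matroid E indep \<longleftrightarrow>
     finite E \<and> indep {} \<and>
     (\<forall>X. indep X \<longrightarrow> X \<subseteq> E) \<and>
     (\<forall>X Y. indep Y \<and> X \<subseteq> Y \<longrightarrow> indep X) \<and>
     (\<forall>X Y. indep X \<and> indep Y \<and> card X < card Y \<longrightarrow> (\<exists>e\<in>Y - X. indep (insert e X)))"

definition loopless :: "'a set \<Rightarrow> ('a set \<Rightarrow> bool) \<Rightarrow> bool" where
  "loopless E indep \<longleftrightarrow> (\<forall>e\<in>E. indep {e})"

definition mrank :: "('a set \<Rightarrow> bool) \<Rightarrow> 'a set \<Rightarrow> nat" where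
  "mrank indep X = Max {card I | I. I \<subseteq> X \<and> indep I}"

definition mcl :: "'a set \<Rightarrow> ('a set \<Rightarrow> bool) \<Rightarrow> 'a set \<Rightarrow> 'a set" where
  "mcl E indep X = {e \<in> E. mrank indep (insert e (X \<inter> E)) = mrank indep (X \<inter> E)}"

definition flats :: "'a set \<Rightarrow> ('a set \<Rightarrow> bool) \<Rightarrow> 'a set set" where
  "flats E indep = {F. F \<subseteq> E \<and> mcl E indep F = F}"

definition bot_flat :: "'a set \<Rightarrow> ('a set \<Rightarrow> bool) \<Rightarrow> 'a set" where
  "bot_flat E indep = mcl E indep {}"

definition Join_flats :: "'a set \<Rightarrow> ('a set \<Rightarrow> bool) \<Rightarrow> 'a set set \<Rightarrow> 'a set" where
  "Join_flats E indep T = mcl E indep (\<Union>T)"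

definition maximals :: "'a set set \<Rightarrow> 'a set set" where
  "maximals H = {X \<in> H. \<not> (\<exists>Y\<in>H. X \<subset> Y)}"

definition factors :: "'a set set \<Rightarrow> 'a set \<Rightarrow> 'a set set" where
  "factors H F = maximals {X \<in> H. X \<subseteq> F}"

definition building_set :: "'a set \<Rightarrow> ('a set \<Rightarrow> bool) \<Rightarrow> 'a set set \<Rightarrow> bool" where
  "building_set E indep H \<longleftrightarrow>
     H \<subseteq> flats E indep - {bot_flat E indep} \<and>
     (\<forall>F\<in>flats E indep. F \<noteq> bot_flat E indep \<longrightarrow>
        (let M = factors H F;
             P = (\<Pi>\<^sub>E X\<in>M. {Y \<in> flats E indep. Y \<subseteq> X});
             j = (\<lambda>x. Join_flats E indep (x ` M))
         in bij_betw j P {Y \<in> flats E indep. Y \<subseteq> F} \<and>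
            (\<forall>x\<in>P. \<forall>y\<in>P. (\<forall>X\<in>M. x X \<subseteq> y X) \<longleftrightarrow> j x \<subseteq> j y)))"

definition antichain_sets :: "'a set set \<Rightarrow> bool" where
  "antichain_sets A \<longleftrightarrow> (\<forall>X\<in>A. \<forall>Y\<in>A. X \<subseteq> Y \<longrightarrow> X = Y)"

definition nested :: "'a set \<Rightarrow> ('a set \<Rightarrow> bool) \<Rightarrow> 'a set set \<Rightarrow> 'a set set \<Rightarrow> bool" where
  "nested E indep H S \<longleftrightarrow>
     S \<subseteq> H \<and>
     (\<forall>A. A \<subseteq> S \<and> antichain_sets A \<longrightarrow>
        (\<forall>T. T \<subseteq> A \<and> finite T \<and> card T \<ge> 2 \<longrightarrow> Join_flats E indep T \<notin> H))"

definition flag_building_set :: "'a set \<Rightarrow> ('a set \<Rightarrow> bool) \<Rightarrow> 'a set set \<Rightarrow> bool" where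
  "flag_building_set E indep H \<longleftrightarrow>
     (\<forall>N. N \<subseteq> H - maximals H \<and> \<not> nested E indep H N \<and>
          (\<forall>N'. N' \<subset> N \<longrightarrow> nested E indep H N') \<longrightarrow> card N = 2)"

end

theory Submission
  imports Defs
begin

text \<open>
  By induction on the number of elements of \<open>G' - G\<close> it suffices to find
  \<open>Y \<in> G' - G\<close> with exactly two \<open>G\<close>-factors such that \<open>insert Y G\<close> is again a building set.

  Such elements exist because \<open>G'\<close> is flag: for \<open>X \<in> G' - G\<close> the \<open>G\<close>-factors of \<open>X\<close> are not
  nested in \<open>G'\<close>, as their join \<open>X\<close> lies in \<open>G'\<close>; a minimal non-nested subset has two elements
  \<open>Z\<^sub>1, Z\<^sub>2\<close>, so their join \<open>Y\<close> lies in \<open>G'\<close>, and its \<open>G\<close>-factors are exactly \<open>Z\<^sub>1, Z\<^sub>2\<close>.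

  Take such a \<open>Y\<close> maximal. For a flat \<open>F \<supseteq> Y\<close>, either \<open>Z\<^sub>1, Z\<^sub>2\<close> lie in one \<open>G\<close>-factor of \<open>F\<close>, which
  then strictly contains \<open>Y\<close>, and the factors of \<open>F\<close> do not change; or they are themselves
  \<open>G\<close>-factors of \<open>F\<close>, since otherwise the join of \<open>Y\<close> with the larger factor would be a larger
  element of \<open>G' - G\<close> with two \<open>G\<close>-factors. In the second case \<open>Y\<close> replaces \<open>Z\<^sub>1, Z\<^sub>2\<close> among the
  factors of \<open>F\<close>, and the join isomorphism for \<open>F\<close> is obtained by composing with the one for \<open>Y\<close>.
\<close>

section \<open>Factors and nested sets\<close>

lemma ex_minimal_failing_subset:
  assumes "finite M" and "\<not> P M"
  obtains N where "N \<subseteq> M" and "\<not> P N" and "\<And>N'. N' \<subset> N \<Longrightarrow> P N'"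
proof -
  obtain N where N: "N \<subseteq> M \<and> \<not> P N" and least: "\<And>N'. N' \<subseteq> M \<and> \<not> P N' \<Longrightarrow> card N \<le> card N'"
    using ex_has_least_nat[of "\<lambda>N. N \<subseteq> M \<and> \<not> P N" M card] assms(2) by blast
  have "P N'" if "N' \<subset> N" for N'
  proof (rule ccontr)
    assume "\<not> P N'"
    then have "card N \<le> card N'" using least that N by blast
    moreover have "card N' < card N"
      using psubset_card_mono[OF finite_subset[OF _ assms(1)] that] N by blast
    ultimately show False by simp
  qed
  then show thesis using that N by blast
qed

lemma factors_iff: "X \<in> factors H F \<longleftrightarrow> X \<in> H \<and> X \<subseteq> F \<and> (\<forall>W\<in>H. W \<subseteq> F \<longrightarrow> \<not> X \<subset> W)"
  unfolding factors_def maximals_def by blast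

lemma factorsD: "X \<in> factors H F \<Longrightarrow> X \<in> H \<and> X \<subseteq> F"
  unfolding factors_iff by blast

lemma factors_subset: "factors H F \<subseteq> H"
  using factorsD by blast

lemma factors_antichain: "D1 \<in> factors H F \<Longrightarrow> D2 \<in> factors H F \<Longrightarrow> D1 \<subseteq> D2 \<Longrightarrow> D1 = D2"
  unfolding factors_iff by blast

lemma finite_factors: "finite H \<Longrightarrow> finite (factors H F)"
  unfolding factors_def maximals_def by auto

lemma ex_factor_superset:
  assumes "finite H" "W \<in> H" "W \<subseteq> F"
  obtains D where "D \<in> factors H F" "W \<subseteq> D"
proof -
  have "finite {X \<in> H. X \<subseteq> F}" using assms(1) by simp
  then obtain D where D: "D \<in> {X \<in> H. X \<subseteq> F}" "W \<subseteq> D"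
      and max: "\<forall>X\<in>{X \<in> H. X \<subseteq> F}. D \<subseteq> X \<longrightarrow> D = X"
    using finite_has_maximal2[of "{X \<in> H. X \<subseteq> F}" W] assms(2,3) by blast
  have "D \<in> factors H F" using D max unfolding factors_def maximals_def by blast
  then show thesis using D(2) by (rule that)
qed

lemma factors_self: "F \<in> H \<Longrightarrow> factors H F = {F}"
  unfolding factors_def maximals_def by auto

lemma factors_insert_not_subset:
  assumes "\<not> Y \<subseteq> F"
  shows "factors (insert Y H) F = factors H F"
proof -
  have "{X \<in> insert Y H. X \<subseteq> F} = {X \<in> H. X \<subseteq> F}" using assms by blast
  then show ?thesis unfolding factors_def by simp
qed

lemma factors_insert_below_factor:
  assumes "Y \<subset> C" "C \<in> factors H F"
  shows "factors (insert Y H) F = factors H F"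
proof (intro equalityI subsetI)
  have C: "C \<in> H" "C \<subseteq> F" using factorsD[OF assms(2)] by auto
  fix X assume X: "X \<in> factors (insert Y H) F"
  then have "X \<noteq> Y" using assms(1) C unfolding factors_iff by blast
  then show "X \<in> factors H F" using X unfolding factors_iff by blast
next
  fix X assume X: "X \<in> factors H F"
  have "\<not> X \<subset> Y"
  proof
    assume "X \<subset> Y"
    then have "X \<subset> C" using assms(1) by (rule psubset_trans)
    then show False using X factorsD[OF assms(2)] unfolding factors_iff by blast
  qed
  then show "X \<in> factors (insert Y H) F" using X unfolding factors_iff by blast
qed

lemma mem_factors_insert:
  assumes "finite H" "Y \<subseteq> F" "factors H Y \<noteq> {}" "factors H Y \<subseteq> factors H F"
  shows "Y \<in> factors (insert Y H) F"
proof -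
  have "\<not> Y \<subset> W" if W: "W \<in> H" "W \<subseteq> F" for W
  proof
    assume YW: "Y \<subset> W"
    obtain D where D: "D \<in> factors H F" "W \<subseteq> D" using ex_factor_superset[OF assms(1) W] .
    obtain Z where Z: "Z \<in> factors H Y" using assms(3) by blast
    have ZY: "Z \<subseteq> Y" using factorsD[OF Z] by blast
    then have "Z \<subseteq> D" using YW D(2) by blast
    then have "Z = D" using factors_antichain[of Z H F D] Z D(1) assms(4) by blast
    then show False using ZY YW D(2) by blast
  qed
  then show ?thesis using assms(2) unfolding factors_iff by blast
qed

lemma factors_insert_merge:
  assumes "finite H" "Y \<notin> H" "Y \<subseteq> F"
    and "factors H Y \<noteq> {}" "factors H Y \<subseteq> factors H F"
  shows "factors (insert Y H) F = insert Y (factors H F - factors H Y)"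
proof (intro equalityI subsetI)
  fix X assume X: "X \<in> factors (insert Y H) F"
  show "X \<in> insert Y (factors H F - factors H Y)"
  proof (cases "X = Y")
    case False
    then have XF: "X \<in> factors H F" using X unfolding factors_iff by blast
    have "X \<notin> factors H Y"
    proof
      assume "X \<in> factors H Y"
      then have "X \<subset> Y" using factorsD assms(2) XF by blast
      then show False using X assms(3) unfolding factors_iff by blast
    qed
    then show ?thesis using XF by blast
  qed simp
next
  fix X assume X: "X \<in> insert Y (factors H F - factors H Y)"
  show "X \<in> factors (insert Y H) F"
  proof (cases "X = Y")
    case True
    then show ?thesis using mem_factors_insert assms(1,3-5) by blast
  next
    case False
    then have XF: "X \<in> factors H F" and XY: "X \<notin> factors H Y" using X by blast+
    have "\<not> X \<subset> Y"
    proof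
      assume "X \<subset> Y"
      moreover have "X \<in> H" using factorsD[OF XF] by blast
      ultimately obtain Z where Z: "Z \<in> factors H Y" "X \<subseteq> Z"
        using ex_factor_superset[OF assms(1)] by blast
      then have "X = Z" using factors_antichain[OF XF, of Z] assms(5) by blast
      then show False using Z(1) XY by blast
    qed
    then show ?thesis using XF unfolding factors_iff by blast
  qed
qed

lemma not_nested_if_Join_mem:
  assumes "antichain_sets M" "finite M" "2 \<le> card M" "Join_flats E indep M \<in> H"
  shows "\<not> nested E indep H M"
proof
  assume "nested E indep H M"
  then have "Join_flats E indep M \<notin> H" using assms(1-3) unfolding nested_def by blast
  then show False using assms(4) by contradiction
qed

lemma Join_mem_if_not_nested_pair:
  assumes "{A, B} \<subseteq> H" "\<not> nested E indep H {A, B}"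
  shows "Join_flats E indep {A, B} \<in> H"
proof -
  obtain T where T: "T \<subseteq> {A, B}" "2 \<le> card T" "Join_flats E indep T \<in> H"
    using assms unfolding nested_def by (meson order_trans)
  have "card {A, B} \<le> 2" by (simp add: card_insert_if)
  then have "T = {A, B}" using T(1,2) by (intro card_seteq) simp_all
  then show ?thesis using T(3) by simp
qed

section \<open>Closure in a loopless matroid\<close>

locale loopless_matroid =
  fixes E :: "'a set" and indep :: "'a set \<Rightarrow> bool"
  assumes matroid: "matroid E indep" and loopless: "loopless E indep"
begin

abbreviation rk where "rk \<equiv> mrank indep"
abbreviation cl where "cl \<equiv> mcl E indep"
abbreviation \<L> where "\<L> \<equiv> flats E indep"

lemma finite_ground: "finite E"
  and indep_subset_ground: "indep X \<Longrightarrow> X \<subseteq> E"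
  and indep_subset: "indep Y \<Longrightarrow> X \<subseteq> Y \<Longrightarrow> indep X"
  and indep_empty: "indep {}"
  and indep_augment: "indep X \<Longrightarrow> indep Y \<Longrightarrow> card X < card Y \<Longrightarrow> \<exists>e\<in>Y - X. indep (insert e X)"
  using matroid unfolding matroid_def by blast+

lemma finite_indep: "indep X \<Longrightarrow> finite X"
  using finite_ground indep_subset_ground finite_subset by blast

lemma finite_rank_values: "finite {card I |I. I \<subseteq> X \<and> indep I}"
proof -
  have "{card I |I. I \<subseteq> X \<and> indep I} \<subseteq> {..card E}"
    using indep_subset_ground finite_ground by (auto intro: card_mono)
  then show ?thesis using finite_subset by blast
qed

lemma card_le_rank: "I \<subseteq> X \<Longrightarrow> indep I \<Longrightarrow> card I \<le> rk X"
  unfolding mrank_def using finite_rank_values by (intro Max_ge) auto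

lemma rank_witness:
  obtains I where "I \<subseteq> X" "indep I" "card I = rk X"
proof -
  have "{card I |I. I \<subseteq> X \<and> indep I} \<noteq> {}" using indep_empty by auto
  then have "rk X \<in> {card I |I. I \<subseteq> X \<and> indep I}"
    unfolding mrank_def using finite_rank_values by (intro Max_in)
  then obtain I where "I \<subseteq> X" "indep I" "card I = rk X" by auto
  then show thesis by (rule that)
qed

lemma rank_mono: "X \<subseteq> Y \<Longrightarrow> rk X \<le> rk Y"
  using card_le_rank by (metis rank_witness subset_trans)

lemma indep_augment_within:
  assumes "indep I" "I \<subseteq> S" "card I < rk S"
  shows "\<exists>f\<in>S - I. indep (insert f I)"
proof -
  obtain J where "J \<subseteq> S" "indep J" "card J = rk S" using rank_witness by blast
  then show ?thesis using indep_augment[of I J] assms by auto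
qed

lemma indep_extend_to_basis:
  assumes "indep B" "B \<subseteq> Y"
  obtains J where "B \<subseteq> J" "J \<subseteq> Y" "indep J" "card J = rk Y"
proof -
  define P where "P J \<longleftrightarrow> B \<subseteq> J \<and> J \<subseteq> Y \<and> indep J" for J
  have "\<And>J. P J \<Longrightarrow> card J < Suc (card E)"
    unfolding P_def using finite_ground indep_subset_ground by (simp add: card_mono less_Suc_eq_le)
  then obtain J where J: "P J" and greatest: "\<And>J'. P J' \<Longrightarrow> card J' \<le> card J"
    using ex_has_greatest_nat[of P B card "Suc (card E)"] assms unfolding P_def by blast
  have "card J = rk Y"
  proof (rule ccontr)
    assume "card J \<noteq> rk Y"
    then have "card J < rk Y" using J card_le_rank unfolding P_def by (simp add: nat_less_le)
    then obtain f where "f \<in> Y - J" "indep (insert f J)"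
      using indep_augment_within J unfolding P_def by blast
    then have "P (insert f J)" and "card (insert f J) = Suc (card J)"
      using J finite_indep unfolding P_def by auto
    then show False using greatest by fastforce
  qed
  then show thesis using that J unfolding P_def by blast
qed

lemma mem_closure_iff: "e \<in> cl X \<longleftrightarrow> e \<in> E \<and> rk (insert e (X \<inter> E)) = rk (X \<inter> E)"
  unfolding mcl_def by auto

lemma closure_subset_ground: "cl X \<subseteq> E"
  unfolding mcl_def by auto

lemma Int_ground_subset_closure: "X \<inter> E \<subseteq> cl X"
  unfolding mcl_def by (auto simp: insert_absorb)

lemma subset_closure: "X \<subseteq> E \<Longrightarrow> X \<subseteq> cl X"
  using Int_ground_subset_closure by blast

lemma closure_Int_ground: "cl (X \<inter> E) = cl X"
  unfolding mcl_def by (simp add: Int_absorb2)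

lemma rank_insert_eq_mono:
  assumes "X \<subseteq> Y" and eq: "rk (insert e X) = rk X"
  shows "rk (insert e Y) = rk Y"
proof (rule ccontr)
  assume "rk (insert e Y) \<noteq> rk Y"
  then have less: "rk Y < rk (insert e Y)" using rank_mono[of Y "insert e Y"] by (simp add: subset_insertI)
  obtain B where B: "B \<subseteq> X" "indep B" "card B = rk X" by (rule rank_witness)
  have "B \<subseteq> Y" using B(1) assms(1) by (rule order_trans)
  then obtain J where J: "B \<subseteq> J" "J \<subseteq> Y" "indep J" "card J = rk Y"
    using indep_extend_to_basis[OF B(2)] by blast
  obtain f where f: "f \<in> insert e Y - J" "indep (insert f J)"
    using indep_augment_within[of J "insert e Y"] J less by auto
  have card_f: "card (insert f J) = Suc (rk Y)" using f J finite_indep by simp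
  show False
  proof (cases "f \<in> Y")
    case True
    then show False using card_le_rank[of "insert f J" Y] f J card_f by simp
  next
    case False
    then have "f = e" "e \<notin> B" using f J by auto
    then have "indep (insert e B)" using indep_subset[of "insert f J" "insert e B"] f(2) J by auto
    then have "card (insert e B) \<le> rk (insert e X)" using card_le_rank[of "insert e B" "insert e X"] B(1) by blast
    then show False using eq B \<open>e \<notin> B\<close> finite_indep by simp
  qed
qed

lemma closure_mono: "X \<subseteq> Y \<Longrightarrow> cl X \<subseteq> cl Y"
proof
  fix e assume "X \<subseteq> Y" "e \<in> cl X"
  then show "e \<in> cl Y"
    unfolding mem_closure_iff using rank_insert_eq_mono[of "X \<inter> E" "Y \<inter> E" e] by auto
qed

lemma rank_closure: "rk (cl X) = rk (X \<inter> E)"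
proof (rule ccontr)
  assume "rk (cl X) \<noteq> rk (X \<inter> E)"
  then have less: "rk (X \<inter> E) < rk (cl X)"
    using rank_mono[OF Int_ground_subset_closure] by (simp add: nat_less_le)
  obtain B where B: "B \<subseteq> X \<inter> E" "indep B" "card B = rk (X \<inter> E)" using rank_witness by blast
  obtain f where f: "f \<in> cl X - B" "indep (insert f B)"
    using indep_augment_within[of B "cl X"] B less Int_ground_subset_closure[of X] by auto
  have "card (insert f B) \<le> rk (insert f (X \<inter> E))" using B f by (intro card_le_rank) auto
  also have "\<dots> = rk (X \<inter> E)" using f mem_closure_iff by blast
  finally show False using B f finite_indep by simp
qed

lemma closure_idem: "cl (cl X) = cl X"
proof
  show "cl X \<subseteq> cl (cl X)" using subset_closure closure_subset_ground by blast
  show "cl (cl X) \<subseteq> cl X"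
  proof
    fix e assume e: "e \<in> cl (cl X)"
    have "rk (insert e (X \<inter> E)) \<le> rk (insert e (cl X))"
      using Int_ground_subset_closure by (intro rank_mono) auto
    also have "\<dots> = rk (X \<inter> E)"
      using e closure_subset_ground rank_closure unfolding mem_closure_iff by (simp add: Int_absorb2)
    finally have "rk (insert e (X \<inter> E)) \<le> rk (X \<inter> E)" .
    moreover have "rk (X \<inter> E) \<le> rk (insert e (X \<inter> E))" by (rule rank_mono) blast
    ultimately show "e \<in> cl X" using e closure_subset_ground unfolding mem_closure_iff by auto
  qed
qed

lemma closure_in_flats: "cl X \<in> \<L>"
  unfolding flats_def using closure_subset_ground closure_idem by auto

lemma flatsD: "F \<in> \<L> \<Longrightarrow> F \<subseteq> E \<and> cl F = F"
  unfolding flats_def by auto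

lemma closure_least: "F \<in> \<L> \<Longrightarrow> X \<subseteq> F \<Longrightarrow> cl X \<subseteq> F"
  using closure_mono flatsD by metis

lemma flat_subset_closure: "F \<in> \<L> \<Longrightarrow> F \<subseteq> X \<Longrightarrow> F \<subseteq> cl X"
  using closure_mono flatsD by metis

lemma closure_empty: "cl {} = {}"
proof -
  have "rk {} = 0" unfolding mrank_def using indep_empty by auto
  moreover have "rk {e} \<noteq> 0" if "e \<in> E" for e
    using loopless card_le_rank[of "{e}" "{e}"] that unfolding loopless_def by auto
  ultimately show ?thesis unfolding mcl_def by auto
qed

lemma bot_flat_eq_empty: "bot_flat E indep = {}"
  unfolding bot_flat_def using closure_empty by simp

lemma empty_in_flats: "{} \<in> \<L>"
  using closure_in_flats closure_empty by metis

lemma closure_Un_closure: "cl (A \<union> cl B) = cl (A \<union> B)"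
proof
  have "(A \<union> B) \<inter> E \<subseteq> A \<union> cl B" using Int_ground_subset_closure by blast
  then show "cl (A \<union> B) \<subseteq> cl (A \<union> cl B)" using closure_mono closure_Int_ground by metis
  have "(A \<union> cl B) \<inter> E \<subseteq> cl (A \<union> B)"
    using Int_ground_subset_closure[of "A \<union> B"] closure_mono[of B "A \<union> B"] by blast
  then show "cl (A \<union> cl B) \<subseteq> cl (A \<union> B)"
    using closure_mono closure_Int_ground closure_idem by metis
qed

lemma flats_Int: "F1 \<in> \<L> \<Longrightarrow> F2 \<in> \<L> \<Longrightarrow> F1 \<inter> F2 \<in> \<L>"
proof -
  assume flats: "F1 \<in> \<L>" "F2 \<in> \<L>"
  then have "cl (F1 \<inter> F2) \<subseteq> F1 \<inter> F2" using closure_least by (meson Int_lower1 Int_lower2 le_inf_iff)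
  moreover have "F1 \<inter> F2 \<subseteq> cl (F1 \<inter> F2)" using flats flatsD subset_closure by (meson le_infI1)
  ultimately show ?thesis unfolding flats_def using flats flatsD by blast
qed

lemma finite_flats: "finite \<L>"
  using finite_ground unfolding flats_def by (simp add: finite_subset[of _ "Pow E"] subset_iff)

section \<open>Join isomorphisms\<close>

definition lower_flats :: "'a set \<Rightarrow> 'a set set" where
  "lower_flats X = {Y \<in> \<L>. Y \<subseteq> X}"

definition join_iso :: "'a set set \<Rightarrow> 'a set \<Rightarrow> bool" where
  "join_iso M F \<longleftrightarrow>
     bij_betw (\<lambda>x. cl (\<Union>(x ` M))) (Pi\<^sub>E M lower_flats) (lower_flats F) \<and>
     (\<forall>x\<in>Pi\<^sub>E M lower_flats. \<forall>y\<in>Pi\<^sub>E M lower_flats.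
        (\<forall>X\<in>M. x X \<subseteq> y X) \<longleftrightarrow> cl (\<Union>(x ` M)) \<subseteq> cl (\<Union>(y ` M)))"

lemma building_set_iff: "building_set E indep H \<longleftrightarrow>
   H \<subseteq> \<L> - {{}} \<and> (\<forall>F\<in>\<L>. F \<noteq> {} \<longrightarrow> join_iso (factors H F) F)"
  unfolding building_set_def join_iso_def lower_flats_def Join_flats_def Let_def bot_flat_eq_empty
  by simp

text \<open>An order embedding is injective, so bijectivity reduces to surjectivity.\<close>

lemma join_iso_iff:
  "join_iso M F \<longleftrightarrow>
     (\<lambda>x. cl (\<Union>(x ` M))) ` Pi\<^sub>E M lower_flats = lower_flats F \<and>
     (\<forall>x\<in>Pi\<^sub>E M lower_flats. \<forall>y\<in>Pi\<^sub>E M lower_flats.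
        (\<forall>X\<in>M. x X \<subseteq> y X) \<longleftrightarrow> cl (\<Union>(x ` M)) \<subseteq> cl (\<Union>(y ` M)))"
  (is "_ \<longleftrightarrow> ?j ` ?P = _ \<and> ?ord")
proof -
  have inj: "inj_on ?j ?P" if ord: ?ord
  proof (rule inj_onI)
    fix x y assume x: "x \<in> ?P" and y: "y \<in> ?P" and eq: "?j x = ?j y"
    have "\<forall>X\<in>M. x X \<subseteq> y X" "\<forall>X\<in>M. y X \<subseteq> x X"
      using ord[rule_format, OF x y] ord[rule_format, OF y x] eq by simp_all
    then show "x = y" using PiE_ext[OF x y] by blast
  qed
  show ?thesis
  proof
    assume "join_iso M F"
    then show "?j ` ?P = lower_flats F \<and> ?ord" unfolding join_iso_def bij_betw_def by (elim conjE) simp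
  next
    assume "?j ` ?P = lower_flats F \<and> ?ord"
    then show "join_iso M F" unfolding join_iso_def bij_betw_def using inj by simp
  qed
qed

lemma join_iso_image:
  "join_iso M F \<Longrightarrow> (\<lambda>x. cl (\<Union>(x ` M))) ` Pi\<^sub>E M lower_flats = lower_flats F"
  unfolding join_iso_iff by (elim conjE)

lemma join_iso_le_iff:
  "join_iso M F \<Longrightarrow> x \<in> Pi\<^sub>E M lower_flats \<Longrightarrow> y \<in> Pi\<^sub>E M lower_flats \<Longrightarrow>
    (\<forall>X\<in>M. x X \<subseteq> y X) \<longleftrightarrow> cl (\<Union>(x ` M)) \<subseteq> cl (\<Union>(y ` M))"
  unfolding join_iso_def by simp

lemma join_iso_join:
  assumes iso: "join_iso M F" and "M \<subseteq> \<L>" "F \<in> \<L>"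
  shows "cl (\<Union>M) = F"
proof -
  let ?t = "restrict id M"
  have t: "?t \<in> Pi\<^sub>E M lower_flats" using assms(2) unfolding lower_flats_def by auto
  note img = join_iso_image[OF iso]
  have "cl (\<Union>(?t ` M)) \<in> lower_flats F" using img t by blast
  then have "cl (\<Union>M) \<subseteq> F" unfolding lower_flats_def by simp
  moreover have "F \<in> lower_flats F" using assms(3) unfolding lower_flats_def by blast
  then obtain y where y: "y \<in> Pi\<^sub>E M lower_flats" "F = cl (\<Union>(y ` M))"
    unfolding img[symmetric] by (rule imageE)
  have "\<forall>X\<in>M. y X \<subseteq> ?t X" using y(1) unfolding lower_flats_def by auto
  then have "F \<subseteq> cl (\<Union>(?t ` M))" using join_iso_le_iff[OF iso y(1) t] y(2) by simp
  ultimately show ?thesis by simp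
qed

lemma join_iso_common_lower_empty:
  assumes iso: "join_iso M F" and "M \<subseteq> \<L>" "S \<subseteq> M" "D \<in> M - S"
    and "K \<in> \<L>" "K \<subseteq> D" "K \<subseteq> cl (\<Union>S)"
  shows "K = {}"
proof -
  define x where "x = restrict (\<lambda>X. if X \<in> S then X else {}) M"
  define u where "u = restrict (\<lambda>X. if X = D then K else {}) M"
  have x: "x \<in> Pi\<^sub>E M lower_flats" and u: "u \<in> Pi\<^sub>E M lower_flats"
    unfolding x_def u_def lower_flats_def using assms empty_in_flats by (auto split: if_splits)
  have "\<Union>(x ` M) = \<Union>S" unfolding x_def using assms(3) by auto
  moreover have "\<Union>(u ` M) = K" unfolding u_def using assms(4) by auto
  ultimately have "cl (\<Union>(u ` M)) \<subseteq> cl (\<Union>(x ` M))" using assms(5,7) flatsD by simp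
  then have "u D \<subseteq> x D" using join_iso_le_iff[OF iso u x] assms(4) by blast
  then show ?thesis unfolding u_def x_def using assms(4) by simp
qed

text \<open>
  If \<open>Z \<subseteq> M\<close> and \<open>join_iso Z Y\<close>, then \<open>join_iso M F\<close> yields \<open>join_iso (insert Y (M - Z)) F\<close>:
  a tuple over \<open>M\<close> corresponds to the tuple over \<open>insert Y (M - Z)\<close> that carries the join of
  its \<open>Z\<close>-components at \<open>Y\<close>, and this correspondence is an order isomorphism preserving joins.
\<close>

definition merge_tuple ::
    "'a set set \<Rightarrow> 'a set set \<Rightarrow> 'a set \<Rightarrow> ('a set \<Rightarrow> 'a set) \<Rightarrow> 'a set \<Rightarrow> 'a set" where
  "merge_tuple M Z Y y = restrict (\<lambda>X. if X = Y then cl (\<Union>(y ` Z)) else y X) (insert Y (M - Z))"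

lemma join_merge_tuple:
  assumes "Z \<subseteq> M" "Y \<notin> M"
  shows "cl (\<Union>(merge_tuple M Z Y y ` insert Y (M - Z))) = cl (\<Union>(y ` M))"
proof -
  have "merge_tuple M Z Y y ` insert Y (M - Z) = insert (cl (\<Union>(y ` Z))) (y ` (M - Z))"
    unfolding merge_tuple_def using assms(2) by auto
  then have "cl (\<Union>(merge_tuple M Z Y y ` insert Y (M - Z))) = cl (\<Union>(y ` (M - Z)) \<union> \<Union>(y ` Z))"
    using closure_Un_closure by (simp add: Un_commute)
  also have "\<Union>(y ` (M - Z)) \<union> \<Union>(y ` Z) = \<Union>(y ` M)" using assms(1) by blast
  finally show ?thesis .
qed

context
  fixes M Z :: "'a set set" and Y :: "'a set"
  assumes iso: "join_iso Z Y" and sub: "Z \<subseteq> M" and new: "Y \<notin> M"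
begin

lemma restrict_in_lower_flats:
  "y \<in> Pi\<^sub>E M lower_flats \<Longrightarrow> restrict y Z \<in> Pi\<^sub>E Z lower_flats"
  using sub by (auto simp: restrict_PiE_iff)

lemma merge_tuple_in:
  assumes y: "y \<in> Pi\<^sub>E M lower_flats"
  shows "merge_tuple M Z Y y \<in> Pi\<^sub>E (insert Y (M - Z)) lower_flats"
proof -
  have "cl (\<Union>(restrict y Z ` Z)) \<in> lower_flats Y"
    using join_iso_image[OF iso] restrict_in_lower_flats[OF y] by blast
  then show ?thesis using y new unfolding merge_tuple_def by (auto simp: restrict_PiE_iff)
qed

lemma merge_tuple_le_iff:
  assumes y: "y \<in> Pi\<^sub>E M lower_flats" and y': "y' \<in> Pi\<^sub>E M lower_flats"
  shows "(\<forall>X\<in>insert Y (M - Z). merge_tuple M Z Y y X \<subseteq> merge_tuple M Z Y y' X)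
         \<longleftrightarrow> (\<forall>X\<in>M. y X \<subseteq> y' X)"
proof -
  have "(\<forall>X\<in>insert Y (M - Z). merge_tuple M Z Y y X \<subseteq> merge_tuple M Z Y y' X)
        \<longleftrightarrow> cl (\<Union>(y ` Z)) \<subseteq> cl (\<Union>(y' ` Z)) \<and> (\<forall>X\<in>M - Z. y X \<subseteq> y' X)"
    unfolding merge_tuple_def using new by auto
  also have "cl (\<Union>(y ` Z)) \<subseteq> cl (\<Union>(y' ` Z)) \<longleftrightarrow> (\<forall>X\<in>Z. y X \<subseteq> y' X)"
    using join_iso_le_iff[OF iso restrict_in_lower_flats[OF y] restrict_in_lower_flats[OF y']]
    by simp
  finally show ?thesis using sub by blast
qed

lemma merge_tuple_image:
  "merge_tuple M Z Y ` Pi\<^sub>E M lower_flats = Pi\<^sub>E (insert Y (M - Z)) lower_flats"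
proof (intro equalityI subsetI)
  fix x assume "x \<in> merge_tuple M Z Y ` Pi\<^sub>E M lower_flats"
  then show "x \<in> Pi\<^sub>E (insert Y (M - Z)) lower_flats" using merge_tuple_in by blast
next
  fix x assume x: "x \<in> Pi\<^sub>E (insert Y (M - Z)) lower_flats"
  then have "x Y \<in> lower_flats Y" by auto
  then obtain q where q: "q \<in> Pi\<^sub>E Z lower_flats" "x Y = cl (\<Union>(q ` Z))"
    unfolding join_iso_image[OF iso, symmetric] by (rule imageE)
  define y where "y = restrict (\<lambda>X. if X \<in> Z then q X else x X) M"
  have y: "y \<in> Pi\<^sub>E M lower_flats" unfolding y_def using q(1) x by (auto simp: restrict_PiE_iff)
  have "merge_tuple M Z Y y = x"
  proof (rule PiE_ext[OF merge_tuple_in[OF y] x])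
    fix X assume X: "X \<in> insert Y (M - Z)"
    show "merge_tuple M Z Y y X = x X"
    proof (cases "X = Y")
      case True
      have "y ` Z = q ` Z" unfolding y_def using sub by auto
      then show ?thesis using True q(2) unfolding merge_tuple_def by simp
    next
      case False
      then show ?thesis using X unfolding merge_tuple_def y_def by simp
    qed
  qed
  then show "x \<in> merge_tuple M Z Y ` Pi\<^sub>E M lower_flats" using y by blast
qed

lemma join_iso_merge:
  assumes "join_iso M F"
  shows "join_iso (insert Y (M - Z)) F"
  unfolding join_iso_iff
proof (intro conjI ballI)
  let ?M' = "insert Y (M - Z)"
  have "(\<lambda>x. cl (\<Union>(x ` ?M'))) ` Pi\<^sub>E ?M' lower_flats
        = (\<lambda>y. cl (\<Union>(y ` M))) ` Pi\<^sub>E M lower_flats"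
    unfolding merge_tuple_image[symmetric] image_image join_merge_tuple[OF sub new] ..
  then show "(\<lambda>x. cl (\<Union>(x ` ?M'))) ` Pi\<^sub>E ?M' lower_flats = lower_flats F"
    using join_iso_image[OF assms] by simp
  fix x x' assume "x \<in> Pi\<^sub>E ?M' lower_flats" "x' \<in> Pi\<^sub>E ?M' lower_flats"
  then obtain y y' where y: "y \<in> Pi\<^sub>E M lower_flats" "x = merge_tuple M Z Y y"
    and y': "y' \<in> Pi\<^sub>E M lower_flats" "x' = merge_tuple M Z Y y'"
    unfolding merge_tuple_image[symmetric] by blast
  have "(\<forall>X\<in>?M'. x X \<subseteq> x' X) \<longleftrightarrow> (\<forall>X\<in>M. y X \<subseteq> y' X)"
    using merge_tuple_le_iff[OF y(1) y'(1)] y(2) y'(2) by simp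
  also have "\<dots> \<longleftrightarrow> cl (\<Union>(y ` M)) \<subseteq> cl (\<Union>(y' ` M))"
    using join_iso_le_iff[OF assms y(1) y'(1)] .
  also have "\<dots> \<longleftrightarrow> cl (\<Union>(x ` ?M')) \<subseteq> cl (\<Union>(x' ` ?M'))"
    using join_merge_tuple[OF sub new] y(2) y'(2) by simp
  finally show "(\<forall>X\<in>?M'. x X \<subseteq> x' X) \<longleftrightarrow> cl (\<Union>(x ` ?M')) \<subseteq> cl (\<Union>(x' ` ?M'))" .
qed

end

section \<open>Building sets\<close>

context
  fixes H :: "'a set set"
  assumes building: "building_set E indep H"
begin

lemma building_set_subset_flats: "H \<subseteq> \<L>"
  and empty_notin_building_set: "{} \<notin> H"
  using building unfolding building_set_iff by auto

lemma finite_building_set: "finite H"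
  using finite_flats building_set_subset_flats by (rule finite_subset[rotated])

lemma factors_subset_flats: "factors H F \<subseteq> \<L>"
  using building_set_subset_flats factorsD by blast

lemma join_iso_factors: "F \<in> \<L> \<Longrightarrow> F \<noteq> {} \<Longrightarrow> join_iso (factors H F) F"
  using building unfolding building_set_iff by blast

lemma closure_Union_factors: "F \<in> \<L> \<Longrightarrow> F \<noteq> {} \<Longrightarrow> cl (\<Union>(factors H F)) = F"
  using join_iso_join join_iso_factors factors_subset_flats by blast

lemma factor_common_lower_empty:
  assumes "F \<in> \<L>" "F \<noteq> {}" "S \<subseteq> factors H F" "D \<in> factors H F - S"
    and "K \<in> \<L>" "K \<subseteq> D" "K \<subseteq> cl (\<Union>S)"
  shows "K = {}"
  using join_iso_common_lower_empty[OF join_iso_factors factors_subset_flats] assms by blast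

lemma factors_disjoint:
  assumes "F \<in> \<L>" "F \<noteq> {}" "D1 \<in> factors H F" "D2 \<in> factors H F" "D1 \<noteq> D2"
  shows "D1 \<inter> D2 = {}"
proof -
  have "D1 \<in> \<L>" "D2 \<in> \<L>" using assms(3,4) factors_subset_flats by blast+
  then show ?thesis
    using factor_common_lower_empty[OF assms(1,2), of "{D2}" D1 "D1 \<inter> D2"] assms(3-5) flats_Int flatsD
    by auto
qed

lemma factors_eqI:
  assumes "F \<in> \<L>" "F \<noteq> {}" "S \<subseteq> factors H F" "F \<subseteq> cl (\<Union>S)"
  shows "factors H F = S"
proof (rule ccontr)
  assume "factors H F \<noteq> S"
  then obtain D where D: "D \<in> factors H F - S" using assms(3) by blast
  then have "D \<in> H" "D \<subseteq> F" using factorsD by blast+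
  then have "D = {}"
    using factor_common_lower_empty[OF assms(1-3) D] assms(4) building_set_subset_flats by blast
  then show False using \<open>D \<in> H\<close> empty_notin_building_set by blast
qed

lemma ex_factor_superset_below_closure_Union:
  assumes F: "F \<in> \<L>" "F \<noteq> {}" and S: "S \<subseteq> factors H F"
    and W: "W \<in> H" "W \<subseteq> cl (\<Union>S)"
  shows "\<exists>Z\<in>S. W \<subseteq> Z"
proof -
  have "\<Union>S \<subseteq> F" using S factorsD by blast
  then have "W \<subseteq> F" using W(2) closure_least[OF F(1)] by blast
  then obtain D where D: "D \<in> factors H F" "W \<subseteq> D"
    by (rule ex_factor_superset[OF finite_building_set W(1)])
  have "D \<in> S"
  proof (rule ccontr)
    assume "D \<notin> S"
    moreover have "W \<in> \<L>" using W(1) building_set_subset_flats by blast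
    ultimately have "W = {}"
      using factor_common_lower_empty[OF F S, of D W] D W(2) by blast
    then show False using W(1) empty_notin_building_set by simp
  qed
  then show ?thesis using D(2) by blast
qed

lemma factors_closure_Union_factors:
  assumes F: "F \<in> \<L>" "F \<noteq> {}" and S: "S \<subseteq> factors H F" "S \<noteq> {}"
  shows "factors H (cl (\<Union>S)) = S"
proof -
  let ?Y = "cl (\<Union>S)"
  have below: "Z \<subseteq> ?Y" if "Z \<in> S" for Z
    using that S(1) factors_subset_flats flat_subset_closure[of Z "\<Union>S"] by blast
  note cover = ex_factor_superset_below_closure_Union[OF F S(1)]
  have sub: "Z \<in> factors H ?Y" if Z: "Z \<in> S" for Z
  proof -
    have ZF: "Z \<in> factors H F" using Z S(1) by blast
    have "\<not> Z \<subset> W" if W: "W \<in> H" "W \<subseteq> ?Y" for W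
    proof
      assume "Z \<subset> W"
      obtain Z' where "Z' \<in> S" "W \<subseteq> Z'" using cover[OF W] by blast
      then have "Z = Z'" using factors_antichain[OF ZF, of Z'] S(1) \<open>Z \<subset> W\<close> by blast
      then show False using \<open>Z \<subset> W\<close> \<open>W \<subseteq> Z'\<close> by blast
    qed
    moreover have "Z \<in> H" using factorsD[OF ZF] by blast
    ultimately show ?thesis using below[OF Z] unfolding factors_iff by blast
  qed
  obtain Z where "Z \<in> S" using S(2) by blast
  then have "Z \<in> H" "Z \<subseteq> ?Y" using S(1) factorsD below by blast+
  then have "?Y \<noteq> {}" using empty_notin_building_set by auto
  moreover have "S \<subseteq> factors H ?Y" using sub by (rule subsetI)
  ultimately show ?thesis using factors_eqI[OF closure_in_flats] by blast
qed

lemma closure_Un_mem_building_set: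
  assumes "A \<in> H" "B \<in> H" "A \<inter> B \<noteq> {}"
  shows "cl (A \<union> B) \<in> H"
proof -
  let ?F = "cl (A \<union> B)"
  have "A \<in> \<L>" "B \<in> \<L>" using assms(1,2) building_set_subset_flats by blast+
  then have AF: "A \<subseteq> ?F" and BF: "B \<subseteq> ?F" using flat_subset_closure by blast+
  obtain P where P: "P \<in> factors H ?F" "A \<subseteq> P"
    by (rule ex_factor_superset[OF finite_building_set assms(1) AF])
  obtain Q where Q: "Q \<in> factors H ?F" "B \<subseteq> Q"
    by (rule ex_factor_superset[OF finite_building_set assms(2) BF])
  have "?F \<noteq> {}" using AF assms(3) by blast
  moreover have "P \<inter> Q \<noteq> {}" using P(2) Q(2) assms(3) by blast
  ultimately have "P = Q" using factors_disjoint[OF closure_in_flats _ P(1) Q(1)] by blast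
  have "P \<in> \<L>" using P(1) factors_subset_flats by blast
  moreover have "A \<union> B \<subseteq> P" using P(2) Q(2) \<open>P = Q\<close> by blast
  ultimately have "?F \<subseteq> P" by (rule closure_least)
  moreover have "P \<subseteq> ?F" "P \<in> H" using factorsD[OF P(1)] by blast+
  ultimately show ?thesis by (simp add: subset_antisym)
qed

lemma two_le_card_factors:
  assumes "F \<in> \<L>" "F \<noteq> {}" "F \<notin> H"
  shows "2 \<le> card (factors H F)"
proof (rule ccontr)
  note join = closure_Union_factors[OF assms(1,2)]
  assume "\<not> 2 \<le> card (factors H F)"
  then consider "card (factors H F) = 0" | "card (factors H F) = 1" by linarith
  then show False
  proof cases
    case 1
    then have "factors H F = {}" using finite_factors[OF finite_building_set, of F] by simp
    then show False using join closure_empty assms(2) by simp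
  next
    case 2
    then obtain Z where Z: "factors H F = {Z}" by (rule card_1_singletonE)
    then have "Z \<in> factors H F" by simp
    then have "Z \<in> H" "Z \<in> \<L>" using factorsD factors_subset_flats by blast+
    then show False using join Z assms(3) flatsD[of Z] by simp
  qed
qed

end

section \<open>Adding an element with two factors\<close>

lemma ex_new_element_with_two_factors:
  assumes G: "building_set E indep G" and G': "building_set E indep G'" and "G \<subseteq> G'"
    and flag: "flag_building_set E indep G'" and X: "X \<in> G' - G"
  shows "\<exists>Y\<in>G' - G. card (factors G Y) = 2"
proof -
  let ?M = "factors G X"
  have "X \<in> \<L>" "X \<noteq> {}"
    using X building_set_subset_flats[OF G'] empty_notin_building_set[OF G'] by blast+
  note XF = this
  have "finite ?M" using finite_factors[OF finite_building_set[OF G]] .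
  have "\<not> nested E indep G' ?M"
  proof (rule not_nested_if_Join_mem)
    show "antichain_sets ?M" unfolding antichain_sets_def using factors_antichain by blast
    show "2 \<le> card ?M" using two_le_card_factors[OF G XF] X by blast
    show "Join_flats E indep ?M \<in> G'"
      unfolding Join_flats_def closure_Union_factors[OF G XF] using X by blast
  qed fact
  then obtain N where N: "N \<subseteq> ?M" "\<not> nested E indep G' N"
    and minimal: "\<And>N'. N' \<subset> N \<Longrightarrow> nested E indep G' N'"
    using ex_minimal_failing_subset[OF \<open>finite ?M\<close>] by blast
  have "N \<subseteq> G' - maximals G'"
  proof
    fix Z assume "Z \<in> N"
    then have "Z \<in> G" "Z \<subset> X" using N(1) factorsD X by blast+
    then show "Z \<in> G' - maximals G'" using X \<open>G \<subseteq> G'\<close> unfolding maximals_def by blast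
  qed
  then have "card N = 2" using flag N(2) minimal unfolding flag_building_set_def by blast
  then obtain Z1 Z2 where Z: "N = {Z1, Z2}" by (meson card_2_iff)
  let ?Y = "cl (Z1 \<union> Z2)"
  have "{Z1, Z2} \<subseteq> G'" using N(1) Z(1) factors_subset[of G X] \<open>G \<subseteq> G'\<close> by blast
  then have "Join_flats E indep {Z1, Z2} \<in> G'"
    using Join_mem_if_not_nested_pair[OF \<open>{Z1, Z2} \<subseteq> G'\<close>] N(2) Z(1) by simp
  then have "?Y \<in> G'" unfolding Join_flats_def by simp
  have "N \<noteq> {}" using Z(1) by blast
  then have "factors G ?Y = N" using factors_closure_Union_factors[OF G XF N(1)] Z(1) by simp
  then have "card (factors G ?Y) = 2" using \<open>card N = 2\<close> by simp
  moreover have "?Y \<notin> G"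
  proof
    assume "?Y \<in> G"
    then have "card (factors G ?Y) = 1" using factors_self[of ?Y G] by simp
    then show False using \<open>card (factors G ?Y) = 2\<close> by simp
  qed
  ultimately show ?thesis using \<open>?Y \<in> G'\<close> by blast
qed

lemma closure_Un_factor_notin:
  assumes G: "building_set E indep G" and F: "F \<in> \<L>" "Y \<subseteq> F"
    and C: "Ca \<in> factors G F" "Cb \<in> factors G F" "Ca \<noteq> Cb"
    and Z: "Z \<in> G" "Z \<subseteq> Y" "Z \<subseteq> Cb"
  shows "cl (Ca \<union> Y) \<notin> G"
proof
  let ?W = "cl (Ca \<union> Y)"
  assume "?W \<in> G"
  have "Ca \<in> G" "Ca \<subseteq> F" using factorsD[OF C(1)] by blast+
  then have "Ca \<in> \<L>" and WF: "?W \<subseteq> F"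
    using building_set_subset_flats[OF G] closure_least[OF F(1)] F(2) by blast+
  obtain D where D: "D \<in> factors G F" "?W \<subseteq> D"
    by (rule ex_factor_superset[OF finite_building_set[OF G] \<open>?W \<in> G\<close> WF])
  have "Ca \<subseteq> ?W" using flat_subset_closure[OF \<open>Ca \<in> \<L>\<close>] by blast
  then have "Ca = D" using factors_antichain[OF C(1) D(1)] D(2) by blast
  moreover have "Y \<subseteq> ?W" using subset_closure[of Y] F(2) flatsD[OF F(1)] closure_mono[of Y "Ca \<union> Y"] by blast
  ultimately have "Z \<subseteq> Ca \<inter> Cb" using Z(2,3) D(2) by blast
  moreover have "Z \<noteq> {}" using Z(1) empty_notin_building_set[OF G] by blast
  moreover have "F \<noteq> {}" using calculation(2) Z(2) F(2) by blast
  ultimately show False using factors_disjoint[OF G F(1) _ C] by blast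
qed

lemma two_factors_closure_Un_factor:
  assumes G: "building_set E indep G"
    and F: "F \<in> \<L>" and Y: "Y \<in> \<L>" "Y \<noteq> {}" "Y \<subseteq> F" and fY: "factors G Y = {Za, Zb}"
    and C: "Ca \<in> factors G F" "Cb \<in> factors G F" "Ca \<noteq> Cb" "Za \<subseteq> Ca" "Zb \<subseteq> Cb"
  shows "cl (Ca \<union> Y) \<notin> G" and "card (factors G (cl (Ca \<union> Y))) = 2"
proof -
  let ?W = "cl (Ca \<union> Y)"
  have fin: "finite G" using finite_building_set[OF G] .
  have Y_eq: "cl (Za \<union> Zb) = Y" using closure_Union_factors[OF G Y(1,2)] fY by simp
  have "Zb \<in> G" "Zb \<subseteq> Y" using fY factorsD[of Zb G Y] by simp_all
  show W_notin: "?W \<notin> G"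
    using closure_Un_factor_notin[OF G F Y(3) C(1-3) \<open>Zb \<in> G\<close> \<open>Zb \<subseteq> Y\<close> C(5)] .
  have "Ca \<in> G" using factorsD[OF C(1)] by blast
  then have "Ca \<in> \<L>" using building_set_subset_flats[OF G] by blast
  have CaW: "Ca \<subseteq> ?W" and YW: "Y \<subseteq> ?W"
    using flat_subset_closure[OF \<open>Ca \<in> \<L>\<close>] flat_subset_closure[OF Y(1)] by blast+
  obtain Q1 where Q1: "Q1 \<in> factors G ?W" "Ca \<subseteq> Q1"
    by (rule ex_factor_superset[OF fin \<open>Ca \<in> G\<close> CaW])
  obtain Q2 where Q2: "Q2 \<in> factors G ?W" "Zb \<subseteq> Q2"
    using ex_factor_superset[OF fin \<open>Zb \<in> G\<close>] \<open>Zb \<subseteq> Y\<close> YW by blast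
  have "Q1 \<in> \<L>" using Q1(1) factors_subset_flats[OF G] by blast
  have Y_le: "Y \<subseteq> cl (Q1 \<union> Q2)"
    unfolding Y_eq[symmetric] using Q1(2) Q2(2) C(4) by (intro closure_mono) blast
  have "Q1 \<noteq> Q2"
  proof
    assume "Q1 = Q2"
    then have "Y \<subseteq> Q1" using Y_le closure_least[OF \<open>Q1 \<in> \<L>\<close>, of "Q1 \<union> Q2"] by simp
    then have "?W \<subseteq> Q1" using Q1(2) closure_least[OF \<open>Q1 \<in> \<L>\<close>] by simp
    then have "?W = Q1" using factorsD[OF Q1(1)] by blast
    then show False using W_notin factorsD[OF Q1(1)] by simp
  qed
  have "Ca \<subseteq> cl (Q1 \<union> Q2)" using Q1(2) flat_subset_closure[OF \<open>Q1 \<in> \<L>\<close>, of "Q1 \<union> Q2"] by blast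
  then have "?W \<subseteq> cl (\<Union>{Q1, Q2})" using Y_le closure_least[OF closure_in_flats] by simp
  moreover have "?W \<noteq> {}" using YW Y(2) by blast
  moreover have "{Q1, Q2} \<subseteq> factors G ?W" using Q1(1) Q2(1) by blast
  ultimately have "factors G ?W = {Q1, Q2}"
    by (intro factors_eqI[OF G closure_in_flats])
  then show "card (factors G ?W) = 2" using \<open>Q1 \<noteq> Q2\<close> by simp
qed

text \<open>Otherwise \<open>cl (Ca \<union> Y)\<close> would be a larger element of \<open>G' - G\<close> with two \<open>G\<close>-factors.\<close>

lemma factor_eq_factor_of_maximal:
  assumes G: "building_set E indep G" and G': "building_set E indep G'" and "G \<subseteq> G'"
    and max: "Y \<in> maximals {W \<in> G' - G. card (factors G W) = 2}"
    and F: "F \<in> \<L>" "Y \<subseteq> F" and fY: "factors G Y = {Za, Zb}"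
    and C: "Ca \<in> factors G F" "Cb \<in> factors G F" "Ca \<noteq> Cb" "Za \<subseteq> Ca" "Zb \<subseteq> Cb"
  shows "Ca = Za"
proof (rule ccontr)
  assume "Ca \<noteq> Za"
  let ?W = "cl (Ca \<union> Y)"
  have Y: "Y \<in> G'" "Y \<notin> G" using max unfolding maximals_def by blast+
  then have "Y \<in> \<L>" "Y \<noteq> {}"
    using building_set_subset_flats[OF G'] empty_notin_building_set[OF G'] by blast+
  note W = two_factors_closure_Un_factor[OF G F(1) this F(2) fY C]
  have Za: "Za \<in> factors G Y" using fY by simp
  then have "Za \<in> G" "Za \<subseteq> Y" using factorsD[OF Za] by blast+
  then have "Za \<noteq> {}" using empty_notin_building_set[OF G] by blast
  have "Ca \<in> G" using factorsD[OF C(1)] by blast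
  then have "Ca \<in> G'" using \<open>G \<subseteq> G'\<close> by blast
  moreover have "Ca \<inter> Y \<noteq> {}" using \<open>Za \<noteq> {}\<close> \<open>Za \<subseteq> Y\<close> C(4) by blast
  ultimately have "?W \<in> G'" using closure_Un_mem_building_set[OF G' _ Y(1)] by blast
  have "\<not> Ca \<subseteq> Y"
  proof
    assume "Ca \<subseteq> Y"
    then obtain Z where Z: "Z \<in> factors G Y" "Ca \<subseteq> Z"
      by (rule ex_factor_superset[OF finite_building_set[OF G] \<open>Ca \<in> G\<close>])
    then have "Za \<subseteq> Z" using C(4) by blast
    then have "Z = Za" using factors_antichain[OF Za Z(1)] by simp
    then show False using Z(2) C(4) \<open>Ca \<noteq> Za\<close> by blast
  qed
  moreover have "Ca \<subseteq> ?W" "Y \<subseteq> ?W"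
    using flat_subset_closure \<open>Ca \<in> G\<close> \<open>Y \<in> \<L>\<close> building_set_subset_flats[OF G] by blast+
  ultimately have "Y \<subset> ?W" by blast
  moreover have "?W \<in> {W \<in> G' - G. card (factors G W) = 2}" using \<open>?W \<in> G'\<close> W by blast
  ultimately show False using max unfolding maximals_def by blast
qed

lemma factors_insert_maximal:
  assumes G: "building_set E indep G" and G': "building_set E indep G'" and "G \<subseteq> G'"
    and max: "Y \<in> maximals {W \<in> G' - G. card (factors G W) = 2}" and F: "F \<in> \<L>"
  shows "factors (insert Y G) F = factors G F \<or>
    factors G Y \<subseteq> factors G F \<and> factors (insert Y G) F = insert Y (factors G F - factors G Y)"
proof (cases "Y \<subseteq> F")
  case False
  then show ?thesis using factors_insert_not_subset[of Y F G] by simp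
next
  case True
  have fin: "finite G" using finite_building_set[OF G] .
  have Y: "Y \<in> G'" "Y \<notin> G" "card (factors G Y) = 2" using max unfolding maximals_def by blast+
  then have "Y \<in> \<L>" "Y \<noteq> {}"
    using building_set_subset_flats[OF G'] empty_notin_building_set[OF G'] by blast+
  obtain Za Zb where fY: "factors G Y = {Za, Zb}" using Y(3) by (meson card_2_iff)
  then have "Za \<in> factors G Y" "Zb \<in> factors G Y" by simp_all
  then have Z: "Za \<in> G" "Zb \<in> G" "Za \<subseteq> F" "Zb \<subseteq> F"
    using factorsD[of Za G Y] factorsD[of Zb G Y] True by blast+
  obtain Ca where Ca: "Ca \<in> factors G F" "Za \<subseteq> Ca" by (rule ex_factor_superset[OF fin Z(1,3)])
  obtain Cb where Cb: "Cb \<in> factors G F" "Zb \<subseteq> Cb" by (rule ex_factor_superset[OF fin Z(2,4)])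
  show ?thesis
  proof (cases "Ca = Cb")
    case True
    have "Ca \<in> \<L>" "Ca \<in> G" using Ca(1) factors_subset_flats[OF G] factors_subset by blast+
    have "cl (Za \<union> Zb) = Y" using closure_Union_factors[OF G \<open>Y \<in> \<L>\<close> \<open>Y \<noteq> {}\<close>] fY by simp
    moreover have "Za \<union> Zb \<subseteq> Ca" using Ca(2) Cb(2) True by blast
    ultimately have "Y \<subseteq> Ca" using closure_least[OF \<open>Ca \<in> \<L>\<close>] by blast
    then have "Y \<subset> Ca" using \<open>Ca \<in> G\<close> Y(2) by blast
    then show ?thesis using factors_insert_below_factor[OF _ Ca(1)] by simp
  next
    case False
    have "factors G Y = {Zb, Za}" using fY by auto
    then have "Cb = Zb"
      using factor_eq_factor_of_maximal[OF G G' \<open>G \<subseteq> G'\<close> max F True _ Cb(1) Ca(1) _ Cb(2) Ca(2)] False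
      by blast
    moreover have "Ca = Za"
      by (rule factor_eq_factor_of_maximal[OF G G' \<open>G \<subseteq> G'\<close> max F True fY Ca(1) Cb(1) False Ca(2) Cb(2)])
    ultimately have "factors G Y \<subseteq> factors G F" using fY Ca(1) Cb(1) by simp
    moreover have "factors G Y \<noteq> {}" using fY by blast
    ultimately show ?thesis using factors_insert_merge[OF fin Y(2) True] by blast
  qed
qed

lemma building_set_insert_maximal:
  assumes G: "building_set E indep G" and G': "building_set E indep G'" and "G \<subseteq> G'"
    and max: "Y \<in> maximals {W \<in> G' - G. card (factors G W) = 2}"
  shows "building_set E indep (insert Y G)"
  unfolding building_set_iff
proof (intro conjI ballI impI)
  have Y: "Y \<in> G'" "Y \<notin> G" using max unfolding maximals_def by blast+
  then have "Y \<in> \<L>" "Y \<noteq> {}"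
    using building_set_subset_flats[OF G'] empty_notin_building_set[OF G'] by blast+
  then show "insert Y G \<subseteq> \<L> - {{}}"
    using building_set_subset_flats[OF G] empty_notin_building_set[OF G] by blast
  fix F assume F: "F \<in> \<L>" "F \<noteq> {}"
  note iso = join_iso_factors[OF G F]
  have "Y \<notin> factors G F" using Y(2) factors_subset by blast
  then have "join_iso (insert Y (factors G F - factors G Y)) F" if "factors G Y \<subseteq> factors G F"
    using join_iso_merge[OF join_iso_factors[OF G \<open>Y \<in> \<L>\<close> \<open>Y \<noteq> {}\<close>] that _ iso] by blast
  then show "join_iso (factors (insert Y G) F) F"
    using factors_insert_maximal[OF G G' \<open>G \<subseteq> G'\<close> max F(1)] iso by metis
qed

lemma ex_insert_building_set:
  assumes G: "building_set E indep G" and G': "building_set E indep G'" and "G \<subset> G'"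
    and flag: "flag_building_set E indep G'"
  obtains Y where "Y \<in> G' - G" "card (factors G Y) = 2" "building_set E indep (insert Y G)"
proof -
  let ?S = "{W \<in> G' - G. card (factors G W) = 2}"
  obtain X where "X \<in> G' - G" using \<open>G \<subset> G'\<close> by blast
  then have "?S \<noteq> {}"
    using ex_new_element_with_two_factors[OF G G' _ flag] \<open>G \<subset> G'\<close> by blast
  moreover have "finite ?S" using finite_building_set[OF G'] by simp
  ultimately obtain Y where "Y \<in> ?S" "\<forall>W\<in>?S. Y \<subseteq> W \<longrightarrow> Y = W"
    using finite_has_maximal by blast
  then have "Y \<in> maximals ?S" unfolding maximals_def by blast
  then show thesis
    using that building_set_insert_maximal[OF G G'] \<open>G \<subset> G'\<close> \<open>Y \<in> ?S\<close> by blast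
qed

end

definition binary_filtration :: "'a set \<Rightarrow> ('a set \<Rightarrow> bool) \<Rightarrow> nat \<Rightarrow> (nat \<Rightarrow> 'a set set) \<Rightarrow> bool"
  where "binary_filtration E indep p Gs \<longleftrightarrow>
    (\<forall>i\<le>p. building_set E indep (Gs i)) \<and>
    (\<forall>i<p. Gs (Suc i) \<subset> Gs i \<and>
           (\<exists>X. Gs i - Gs (Suc i) = {X} \<and> card (factors (Gs (Suc i)) X) = 2))"

lemma binary_filtration_0: "building_set E indep G \<Longrightarrow> binary_filtration E indep 0 (\<lambda>_. G)"
  unfolding binary_filtration_def by simp

lemma binary_filtration_Suc:
  assumes "binary_filtration E indep p Gs" "Gs p = insert Y G" "Y \<notin> G"
    and "building_set E indep G" "card (factors G Y) = 2"
  shows "binary_filtration E indep (Suc p) (Gs(Suc p := G))"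
proof -
  have "insert Y G - G = {Y}" using assms(3) by blast
  then show ?thesis
    using assms unfolding binary_filtration_def by (auto simp: less_Suc_eq le_Suc_eq)
qed

context loopless_matroid
begin

lemma ex_binary_filtration:
  assumes "building_set E indep G" and G': "building_set E indep G'" and "G \<subseteq> G'"
    and flag: "flag_building_set E indep G'"
  shows "\<exists>p Gs. Gs p = G \<and> Gs 0 = G' \<and> binary_filtration E indep p Gs"
  using assms(1,3)
proof (induction "card (G' - G)" arbitrary: G rule: less_induct)
  case less
  show ?case
  proof (cases "G = G'")
    case True
    then show ?thesis
      using binary_filtration_0[OF G'] by (intro exI[of _ 0] exI[of _ "\<lambda>_. G'"]) simp
  next
    case False
    then have "G \<subset> G'" using less.prems(2) by blast
    then obtain Y where Y: "Y \<in> G' - G" "card (factors G Y) = 2" "building_set E indep (insert Y G)"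
      by (rule ex_insert_building_set[OF less.prems(1) G' _ flag])
    have "card ((G' - G) - {Y}) < card (G' - G)"
      using Y(1) finite_building_set[OF G'] by (intro card_Diff1_less) simp_all
    moreover have "G' - insert Y G = (G' - G) - {Y}" by blast
    ultimately have "card (G' - insert Y G) < card (G' - G)" by simp
    moreover have "insert Y G \<subseteq> G'" using Y(1) less.prems(2) by blast
    ultimately obtain p Gs where Gs: "Gs p = insert Y G" "Gs 0 = G'" "binary_filtration E indep p Gs"
      using less.hyps[OF _ Y(3)] by blast
    have "binary_filtration E indep (Suc p) (Gs(Suc p := G))"
      using binary_filtration_Suc[OF Gs(3,1)] Y(1,2) less.prems(1) by blast
    then show ?thesis using Gs(2) by (intro exI[of _ "Suc p"] exI[of _ "Gs(Suc p := G)"]) simp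
  qed
qed

end

theorem proposition3p21:
  fixes E :: "'a set" and indep :: "'a set \<Rightarrow> bool" and G G' :: "'a set set"
  assumes "matroid E indep" and "loopless E indep"
    and "building_set E indep G" and "building_set E indep G'"
    and "G \<subseteq> G'"
    and "flag_building_set E indep G'"
  shows "\<exists>(p::nat) (Gs :: nat \<Rightarrow> 'a set set).
           Gs p = G \<and> Gs 0 = G' \<and>
           (\<forall>i\<le>p. building_set E indep (Gs i)) \<and>
           (\<forall>i<p. Gs (Suc i) \<subset> Gs i \<and>
                  (\<exists>X. Gs i - Gs (Suc i) = {X} \<and> card (factors (Gs (Suc i)) X) = 2))"
proof -
  interpret loopless_matroid E indep using assms(1,2) by unfold_locales
  show ?thesis
    using ex_binary_filtration[OF assms(3-6)] unfolding binary_filtration_def by simp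
qed

end
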